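(* Let $C\subseteq[n]$ be a nonempty proper subset and let $\ket{\psi}=\ket{a}_C\otimes\ket{b}_{\overline{C}}$ be an $n$-qubit state, where $\ket{a}_C$ and $\ket{b}_{\overline{C}}$ are each $\epsilon$-far from every multipartite product state (on the qubits of $C$ and of $\overline{C}$ respectively). Let $S\subseteq[n]$ be a nonempty proper subset of the qubits. Then the reduced state $\psi_S$ on the qubits of $S$ satisfies $\mathrm{Tr}(\psi_S^2)=1$ if $S=C$ or $S=\overline{C}$, and otherwise $\mathrm{Tr}(\psi_S^2)\le1-\epsilon^2$.
   Context: $\overline{S}=[n]\setminus S$ for $S\subseteq[n]$. A state on a set $Q$ of qubits is multipartite product if it can be written as $\ket{a'}_D\otimes\ket{b'}_{Q\setminus D}$ for some nonempty proper subset $D\subsetneq Q$. A pure state $\ket{\phi}$ is $\epsilon$-far from a set $\mathcal{P}$ of pure states if $|\langle\phi|\chi\rangle|^2\le1-\epsilon^2$ for all $\ket{\chi}\in\mathcal{P}$ (equivalently trace distance at least $\epsilon$). *)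

theory Defs
  imports Complex_Main
begin

text \<open>A computational basis vector of the qubits Q is identified with the subset
  x \<subseteq> Q of qubits that are in state 1.  A (pure) state on Q is a
  normalized amplitude function supported on Pow Q.\<close>

definition is_state :: "nat set \<Rightarrow> (nat set \<Rightarrow> complex) \<Rightarrow> bool" where
  "is_state Q f \<longleftrightarrow> finite Q \<and> (\<forall>x. f x \<noteq> 0 \<longrightarrow> x \<subseteq> Q)
     \<and> (\<Sum>x\<in>Pow Q. (cmod (f x))\<^sup>2) = 1"

definition tensor :: "nat set \<Rightarrow> (nat set \<Rightarrow> complex) \<Rightarrow> nat set \<Rightarrow> (nat set \<Rightarrow> complex)
    \<Rightarrow> nat set \<Rightarrow> complex" where
  "tensor D f E g = (\<lambda>x. if x \<subseteq> D \<union> E then f (x \<inter> D) * g (x \<inter> E) else 0)"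

definition inner_Q :: "nat set \<Rightarrow> (nat set \<Rightarrow> complex) \<Rightarrow> (nat set \<Rightarrow> complex) \<Rightarrow> complex" where
  "inner_Q Q f g = (\<Sum>x\<in>Pow Q. cnj (f x) * g x)"

definition multipartite_product :: "nat set \<Rightarrow> (nat set \<Rightarrow> complex) \<Rightarrow> bool" where
  "multipartite_product Q \<chi> \<longleftrightarrow> (\<exists>D a' b'. D \<noteq> {} \<and> D \<subset> Q \<and>
     is_state D a' \<and> is_state (Q - D) b' \<and> \<chi> = tensor D a' (Q - D) b')"

definition far_from_product :: "real \<Rightarrow> nat set \<Rightarrow> (nat set \<Rightarrow> complex) \<Rightarrow> bool" where
  "far_from_product \<epsilon> Q \<phi> \<longleftrightarrow>
     (\<forall>\<chi>. is_state Q \<chi> \<and> multipartite_product Q \<chi> \<longrightarrow> (cmod (inner_Q Q \<phi> \<chi>))\<^sup>2 \<le> 1 - \<epsilon>\<^sup>2)"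

definition reduced :: "nat \<Rightarrow> (nat set \<Rightarrow> complex) \<Rightarrow> nat set \<Rightarrow> nat set \<Rightarrow> nat set \<Rightarrow> complex" where
  "reduced n \<psi> S x y = (\<Sum>z\<in>Pow ({..<n} - S). \<psi> (x \<union> z) * cnj (\<psi> (y \<union> z)))"

definition purity :: "nat \<Rightarrow> (nat set \<Rightarrow> complex) \<Rightarrow> nat set \<Rightarrow> complex" where
  "purity n \<psi> S = (\<Sum>x\<in>Pow S. \<Sum>y\<in>Pow S. reduced n \<psi> S x y * reduced n \<psi> S y x)"

end

theory Submission
  imports Defs "HOL-Analysis.Convex"
begin

text \<open>The reduced state of a product \<open>a \<otimes> b\<close> across \<open>C | C'\<close> on S is the product of the
  reduced states of a on \<open>S \<inter> C\<close> and of b on \<open>S \<inter> C'\<close>, so the purity factorizes.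
  A factor is 1 when its cut is trivial and at most 1 always.  For a nontrivial cut \<open>T | U\<close>
  of a state f, let M be the \<open>T \<times> U\<close> matrix of amplitudes, so that \<open>\<rho>\<^sub>T = M M\<^sup>*\<close>.  Then
  \<open>Tr(\<rho>\<^sub>T\<^sup>2) = \<parallel>M M\<^sup>*\<parallel>\<^sub>F\<^sup>2 \<le> \<parallel>M\<parallel>\<^sup>2 \<parallel>M\<^sup>*\<parallel>\<^sub>F\<^sup>2 = \<parallel>M\<parallel>\<^sup>2\<close>, and \<open>\<parallel>M\<parallel>\<^sup>2\<close> is the largest overlap
  \<open>|\<langle>f, u \<otimes> v\<rangle>|\<^sup>2\<close> of f with a product state across the cut, which is at most \<open>1 - \<epsilon>\<^sup>2\<close>
  when f is \<open>\<epsilon>\<close>-far from product states.\<close>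

lemma sum_Pow_Un:
  assumes "finite D" "finite E" "D \<inter> E = {}"
  shows "(\<Sum>x\<in>Pow (D \<union> E). h x) = (\<Sum>x\<in>Pow D. \<Sum>y\<in>Pow E. h (x \<union> y))"
proof -
  have "bij_betw (\<lambda>(x, y). x \<union> y) (Pow D \<times> Pow E) (Pow (D \<union> E))"
    by (rule bij_betwI[where g = "\<lambda>X. (X \<inter> D, X \<inter> E)"]) (use assms(3) in auto)
  then have "(\<Sum>x\<in>Pow (D \<union> E). h x) = (\<Sum>(x, y)\<in>Pow D \<times> Pow E. h (x \<union> y))"
    by (simp add: sum.reindex_bij_betw[symmetric] case_prod_unfold)
  then show ?thesis
    by (simp add: sum.cartesian_product)
qed

lemma is_state_finite: "is_state Q f \<Longrightarrow> finite Q"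
  unfolding is_state_def by simp

lemma tensor_Un:
  assumes "x \<subseteq> D" "y \<subseteq> E" "D \<inter> E = {}"
  shows "tensor D f E g (x \<union> y) = f x * g y"
proof -
  have "(x \<union> y) \<inter> D = x" "(x \<union> y) \<inter> E = y"
    using assms by blast+
  then show ?thesis
    using assms unfolding tensor_def by auto
qed

lemma is_state_tensor:
  assumes "is_state D f" "is_state E g" "D \<inter> E = {}"
  shows "is_state (D \<union> E) (tensor D f E g)"
proof -
  have fin: "finite D" "finite E"
    using assms(1,2) is_state_finite by blast+
  have "(\<Sum>x\<in>Pow (D \<union> E). (cmod (tensor D f E g x))\<^sup>2)
      = (\<Sum>x\<in>Pow D. \<Sum>y\<in>Pow E. (cmod (f x))\<^sup>2 * (cmod (g y))\<^sup>2)"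
    using assms(3) by (simp add: sum_Pow_Un fin tensor_Un norm_mult power_mult_distrib)
  also have "\<dots> = (\<Sum>x\<in>Pow D. (cmod (f x))\<^sup>2) * (\<Sum>y\<in>Pow E. (cmod (g y))\<^sup>2)"
    by (simp add: sum_product)
  also have "\<dots> = 1"
    using assms unfolding is_state_def by simp
  finally show ?thesis
    using fin unfolding is_state_def tensor_def by auto
qed

lemma is_state_tensor_complement:
  assumes "is_state T u" "is_state (Q - T) v" "T \<subseteq> Q"
  shows "is_state Q (tensor T u (Q - T) v)"
  using is_state_tensor[OF assms(1,2)] assms(3) by (simp add: Un_absorb1)

lemma is_state_indicator_empty:
  assumes "finite Q"
  shows "is_state Q (\<lambda>x. if x = {} then 1 else 0)"
proof -
  have "(cmod (if x = {} then 1 else 0))\<^sup>2 = (if x = {} then 1 else (0::real))" for x :: "nat set"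
    by simp
  then show ?thesis
    using assms unfolding is_state_def by (simp add: sum.delta)
qed

definition normalize_on :: "nat set \<Rightarrow> (nat set \<Rightarrow> complex) \<Rightarrow> nat set \<Rightarrow> complex" where
  "normalize_on Q g x = (if x \<subseteq> Q then g x / of_real (sqrt (\<Sum>y\<in>Pow Q. (cmod (g y))\<^sup>2)) else 0)"

lemma is_state_normalize_on:
  assumes "finite Q" "(\<Sum>y\<in>Pow Q. (cmod (g y))\<^sup>2) \<noteq> 0"
  shows "is_state Q (normalize_on Q g)"
proof -
  define N where "N = (\<Sum>y\<in>Pow Q. (cmod (g y))\<^sup>2)"
  have "N > 0"
    using assms(2) unfolding N_def by (simp add: order_less_le sum_nonneg)
  have "(\<Sum>x\<in>Pow Q. (cmod (normalize_on Q g x))\<^sup>2) = (\<Sum>x\<in>Pow Q. (cmod (g x))\<^sup>2 / N)"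
    unfolding normalize_on_def N_def[symmetric] using \<open>N > 0\<close>
    by (intro sum.cong refl) (simp add: norm_divide power_divide)
  also have "\<dots> = 1"
    using \<open>N > 0\<close> unfolding N_def sum_divide_distrib[symmetric] by simp
  finally show ?thesis
    using assms(1) unfolding is_state_def normalize_on_def by auto
qed

lemma inner_Q_tensor:
  assumes "finite T" "finite U" "T \<inter> U = {}"
  shows "inner_Q (T \<union> U) f (tensor T u U v)
    = (\<Sum>x\<in>Pow T. \<Sum>z\<in>Pow U. cnj (f (x \<union> z)) * u x * v z)"
  unfolding inner_Q_def using assms by (simp add: sum_Pow_Un tensor_Un mult.assoc)

lemma norm_inner_Q_le_1:
  assumes "is_state Q f" "is_state Q g"
  shows "(cmod (inner_Q Q f g))\<^sup>2 \<le> 1"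
proof -
  have "cmod (inner_Q Q f g) \<le> (\<Sum>x\<in>Pow Q. cmod (f x) * cmod (g x))"
    unfolding inner_Q_def by (rule order_trans[OF norm_sum]) (simp add: norm_mult)
  then have "(cmod (inner_Q Q f g))\<^sup>2 \<le> (\<Sum>x\<in>Pow Q. cmod (f x) * cmod (g x))\<^sup>2"
    by (simp add: power_mono)
  also have "\<dots> \<le> (\<Sum>x\<in>Pow Q. (cmod (f x))\<^sup>2) * (\<Sum>x\<in>Pow Q. (cmod (g x))\<^sup>2)"
    by (rule Cauchy_Schwarz_ineq_sum)
  finally show ?thesis
    using assms unfolding is_state_def by simp
qed

lemma amplitude_matrix_norm_le:
  assumes "finite Q" and "T \<subseteq> Q"
    and overlap: "\<And>u v. is_state T u \<Longrightarrow> is_state (Q - T) v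
      \<Longrightarrow> (cmod (inner_Q Q f (tensor T u (Q - T) v)))\<^sup>2 \<le> K"
  shows "(\<Sum>x\<in>Pow T. (cmod (\<Sum>z\<in>Pow (Q - T). f (x \<union> z) * t z))\<^sup>2)
    \<le> K * (\<Sum>z\<in>Pow (Q - T). (cmod (t z))\<^sup>2)"
proof -
  define U where "U = Q - T"
  define w where "w x = (\<Sum>z\<in>Pow U. f (x \<union> z) * t z)" for x
  define W where "W = (\<Sum>x\<in>Pow T. (cmod (w x))\<^sup>2)"
  define N where "N = (\<Sum>z\<in>Pow U. (cmod (t z))\<^sup>2)"
  have fin: "finite T" "finite U"
    using \<open>finite Q\<close> \<open>T \<subseteq> Q\<close> unfolding U_def by (auto intro: finite_subset)
  have dj: "T \<inter> U = {}" and QTU: "T \<union> U = Q"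
    using \<open>T \<subseteq> Q\<close> unfolding U_def by auto
  have "0 \<le> K"
    using overlap[OF is_state_indicator_empty is_state_indicator_empty] fin U_def
    by (meson order_trans zero_le_power2)
  have "W \<le> K * N"
  proof (cases "W = 0")
    case True
    then show ?thesis
      using \<open>0 \<le> K\<close> unfolding N_def by (simp add: sum_nonneg)
  next
    case False
    have "N \<noteq> 0"
    proof
      assume "N = 0"
      then have "t z = 0" if "z \<in> Pow U" for z
        using that fin unfolding N_def by (simp add: sum_nonneg_eq_0_iff)
      then have "w x = 0" for x
        unfolding w_def by simp
      then show False
        using False unfolding W_def by simp
    qed
    \<comment> \<open>The overlap of f with the product of the normalizations of w and cnj t is
      \<open>W / (sqrt W * sqrt N)\<close>, whose square is \<open>W / N\<close>.\<close>
    define u where "u = normalize_on T w"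
    define v where "v = normalize_on U (\<lambda>z. cnj (t z))"
    have u: "is_state T u" and v: "is_state U v"
      unfolding u_def v_def using fin False \<open>N \<noteq> 0\<close>
      by (auto intro!: is_state_normalize_on simp: W_def N_def)
    have u_eq: "u x = w x / of_real (sqrt W)" if "x \<subseteq> T" for x
      using that unfolding u_def normalize_on_def W_def by simp
    have v_eq: "v z = cnj (t z) / of_real (sqrt N)" if "z \<subseteq> U" for z
      using that unfolding v_def normalize_on_def N_def by simp
    have "0 < W" "0 < N"
      using False \<open>N \<noteq> 0\<close> unfolding W_def N_def by (simp_all add: order_less_le sum_nonneg)
    have "inner_Q Q f (tensor T u U v) = (\<Sum>x\<in>Pow T. \<Sum>z\<in>Pow U. cnj (f (x \<union> z)) * u x * v z)"
      using inner_Q_tensor[OF fin dj] QTU by simp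
    also have "\<dots> = (\<Sum>x\<in>Pow T. u x * cnj (w x) / of_real (sqrt N))"
      unfolding w_def by (intro sum.cong refl)
        (simp add: v_eq sum_distrib_left sum_divide_distrib ac_simps)
    also have "\<dots> = (\<Sum>x\<in>Pow T. w x * cnj (w x)) / of_real (sqrt W * sqrt N)"
      by (simp add: u_eq sum_divide_distrib)
    also have "\<dots> = of_real (W / (sqrt W * sqrt N))"
      unfolding W_def of_real_divide of_real_sum complex_norm_square ..
    finally have "(cmod (inner_Q Q f (tensor T u U v)))\<^sup>2 = (W / (sqrt W * sqrt N))\<^sup>2"
      by (simp only: norm_of_real power2_abs)
    also have "\<dots> = W / N"
      using \<open>0 < W\<close> \<open>0 < N\<close> by (simp add: power_divide power_mult_distrib) (simp add: power2_eq_square)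
    finally have "W / N \<le> K"
      using overlap[OF u, of v] v unfolding U_def by simp
    then show ?thesis
      using \<open>0 < N\<close> by (simp add: pos_divide_le_eq mult.commute)
  qed
  then show ?thesis
    unfolding W_def N_def w_def U_def .
qed

text \<open>\<open>reduced_on Q f T\<close> is the density matrix \<open>\<rho>\<^sub>T\<close> of f reduced to T, and
  \<open>purity_on Q f T\<close> is \<open>Tr(\<rho>\<^sub>T\<^sup>2)\<close>, written as the squared Frobenius norm of the
  Hermitian \<open>\<rho>\<^sub>T\<close>.\<close>

definition reduced_on :: "nat set \<Rightarrow> (nat set \<Rightarrow> complex) \<Rightarrow> nat set \<Rightarrow> nat set \<Rightarrow> nat set \<Rightarrow> complex" where
  "reduced_on Q f T x y = (\<Sum>z\<in>Pow (Q - T). f (x \<union> z) * cnj (f (y \<union> z)))"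

definition purity_on :: "nat set \<Rightarrow> (nat set \<Rightarrow> complex) \<Rightarrow> nat set \<Rightarrow> real" where
  "purity_on Q f T = (\<Sum>x\<in>Pow T. \<Sum>y\<in>Pow T. (cmod (reduced_on Q f T x y))\<^sup>2)"

lemma reduced_on_swap: "reduced_on Q f T y x = cnj (reduced_on Q f T x y)"
  unfolding reduced_on_def by (simp add: ac_simps)

lemma purity_eq_purity_on: "purity n \<psi> S = of_real (purity_on {..<n} \<psi> S)"
proof -
  have "reduced n \<psi> S = reduced_on {..<n} \<psi> S"
    by (simp add: fun_eq_iff reduced_def reduced_on_def)
  then have "reduced n \<psi> S x y * reduced n \<psi> S y x = of_real ((cmod (reduced_on {..<n} \<psi> S x y))\<^sup>2)"
    for x y
    unfolding complex_norm_square by (simp add: reduced_on_swap[of _ _ _ y x])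
  then show ?thesis
    unfolding purity_def purity_on_def by simp
qed

lemma purity_on_nonneg: "0 \<le> purity_on Q f T"
  unfolding purity_on_def by (simp add: sum_nonneg)

lemma purity_on_le_overlap:
  assumes st: "is_state Q f" and "T \<subseteq> Q"
    and overlap: "\<And>u v. is_state T u \<Longrightarrow> is_state (Q - T) v
      \<Longrightarrow> (cmod (inner_Q Q f (tensor T u (Q - T) v)))\<^sup>2 \<le> K"
  shows "purity_on Q f T \<le> K"
proof -
  define U where "U = Q - T"
  have fin: "finite T" "finite U" and dj: "T \<inter> U = {}" and QTU: "T \<union> U = Q"
    using is_state_finite[OF st] \<open>T \<subseteq> Q\<close> unfolding U_def by (auto intro: finite_subset)
  have "purity_on Q f T
      = (\<Sum>y\<in>Pow T. \<Sum>x\<in>Pow T. (cmod (\<Sum>z\<in>Pow U. f (x \<union> z) * cnj (f (y \<union> z))))\<^sup>2)"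
    unfolding purity_on_def reduced_on_def U_def by (rule sum.swap)
  also have "\<dots> \<le> (\<Sum>y\<in>Pow T. K * (\<Sum>z\<in>Pow U. (cmod (f (y \<union> z)))\<^sup>2))"
    unfolding U_def
    by (intro sum_mono order_trans[OF amplitude_matrix_norm_le[OF is_state_finite[OF st] \<open>T \<subseteq> Q\<close> overlap]]) simp_all
  also have "\<dots> = K * (\<Sum>x\<in>Pow Q. (cmod (f x))\<^sup>2)"
    unfolding QTU[symmetric] using fin dj by (simp add: sum_Pow_Un sum_distrib_left)
  also have "\<dots> = K"
    using st unfolding is_state_def by simp
  finally show ?thesis .
qed

lemma purity_on_le_1:
  assumes "is_state Q f" "T \<subseteq> Q"
  shows "purity_on Q f T \<le> 1"
  using assms by (intro purity_on_le_overlap norm_inner_Q_le_1 is_state_tensor_complement)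

lemma purity_on_le_far:
  assumes "is_state Q f" "far_from_product \<epsilon> Q f" "T \<noteq> {}" "T \<subset> Q"
  shows "purity_on Q f T \<le> 1 - \<epsilon>\<^sup>2"
proof (rule purity_on_le_overlap)
  fix u v
  assume "is_state T u" "is_state (Q - T) v"
  then have "is_state Q (tensor T u (Q - T) v)" "multipartite_product Q (tensor T u (Q - T) v)"
    using is_state_tensor_complement assms(3,4) unfolding multipartite_product_def by blast+
  then show "(cmod (inner_Q Q f (tensor T u (Q - T) v)))\<^sup>2 \<le> 1 - \<epsilon>\<^sup>2"
    using assms(2) unfolding far_from_product_def by blast
qed (use assms in auto)

lemma purity_on_full:
  assumes "is_state Q f"
  shows "purity_on Q f Q = 1"
proof -
  have "purity_on Q f Q = (\<Sum>x\<in>Pow Q. \<Sum>y\<in>Pow Q. (cmod (f x))\<^sup>2 * (cmod (f y))\<^sup>2)"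
    unfolding purity_on_def reduced_on_def by (simp add: norm_mult power_mult_distrib)
  also have "\<dots> = (\<Sum>x\<in>Pow Q. (cmod (f x))\<^sup>2) * (\<Sum>y\<in>Pow Q. (cmod (f y))\<^sup>2)"
    by (simp add: sum_product)
  finally show ?thesis
    using assms unfolding is_state_def by simp
qed

lemma purity_on_empty:
  assumes "is_state Q f"
  shows "purity_on Q f {} = 1"
proof -
  have "reduced_on Q f {} {} {} = of_real (\<Sum>z\<in>Pow Q. (cmod (f z))\<^sup>2)"
    unfolding reduced_on_def of_real_sum complex_norm_square by simp
  then show ?thesis
    using assms unfolding purity_on_def is_state_def by simp
qed

lemma reduced_on_tensor:
  assumes fin: "finite D" "finite E" and dj: "D \<inter> E = {}" and T: "T \<subseteq> D \<union> E"
    and "x \<subseteq> T" "y \<subseteq> T"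
  shows "reduced_on (D \<union> E) (tensor D f E g) T x y
    = reduced_on D f (T \<inter> D) (x \<inter> D) (y \<inter> D) * reduced_on E g (T \<inter> E) (x \<inter> E) (y \<inter> E)"
proof -
  have split: "D \<union> E - T = (D - T) \<union> (E - T)" "D - T \<inter> D = D - T" "E - T \<inter> E = E - T"
    by auto
  have "reduced_on (D \<union> E) (tensor D f E g) T x y
      = (\<Sum>z1\<in>Pow (D - T). \<Sum>z2\<in>Pow (E - T).
          tensor D f E g (x \<union> (z1 \<union> z2)) * cnj (tensor D f E g (y \<union> (z1 \<union> z2))))"
    unfolding reduced_on_def split(1) using fin dj by (intro sum_Pow_Un) auto
  also have "\<dots> = (\<Sum>z1\<in>Pow (D - T). \<Sum>z2\<in>Pow (E - T).
      f (x \<inter> D \<union> z1) * cnj (f (y \<inter> D \<union> z1)) * (g (x \<inter> E \<union> z2) * cnj (g (y \<inter> E \<union> z2))))"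
  proof (intro sum.cong refl)
    fix z1 z2
    assume "z1 \<in> Pow (D - T)" "z2 \<in> Pow (E - T)"
    then have "x \<inter> D \<union> z1 \<subseteq> D" "y \<inter> D \<union> z1 \<subseteq> D" "x \<inter> E \<union> z2 \<subseteq> E" "y \<inter> E \<union> z2 \<subseteq> E"
      by auto
    moreover have "x \<union> (z1 \<union> z2) = (x \<inter> D \<union> z1) \<union> (x \<inter> E \<union> z2)"
      "y \<union> (z1 \<union> z2) = (y \<inter> D \<union> z1) \<union> (y \<inter> E \<union> z2)"
      using assms by blast+
    ultimately show "tensor D f E g (x \<union> (z1 \<union> z2)) * cnj (tensor D f E g (y \<union> (z1 \<union> z2)))
      = f (x \<inter> D \<union> z1) * cnj (f (y \<inter> D \<union> z1)) * (g (x \<inter> E \<union> z2) * cnj (g (y \<inter> E \<union> z2)))"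
      using dj by (simp only: tensor_Un) (simp add: ac_simps)
  qed
  also have "\<dots> = reduced_on D f (T \<inter> D) (x \<inter> D) (y \<inter> D) * reduced_on E g (T \<inter> E) (x \<inter> E) (y \<inter> E)"
    unfolding reduced_on_def split(2,3) by (simp add: sum_product)
  finally show ?thesis .
qed

lemma purity_on_tensor:
  assumes fin: "finite D" "finite E" and dj: "D \<inter> E = {}" and T: "T \<subseteq> D \<union> E"
  shows "purity_on (D \<union> E) (tensor D f E g) T = purity_on D f (T \<inter> D) * purity_on E g (T \<inter> E)"
proof -
  let ?A = "reduced_on D f (T \<inter> D)" and ?B = "reduced_on E g (T \<inter> E)"
  have PowT: "Pow T = Pow ((T \<inter> D) \<union> (T \<inter> E))"
    using T by blast
  have "purity_on (D \<union> E) (tensor D f E g) T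
      = (\<Sum>x\<in>Pow T. \<Sum>y\<in>Pow T. (cmod (?A (x \<inter> D) (y \<inter> D)))\<^sup>2 * (cmod (?B (x \<inter> E) (y \<inter> E)))\<^sup>2)"
    unfolding purity_on_def using assms
    by (intro sum.cong refl) (simp add: reduced_on_tensor norm_mult power_mult_distrib)
  also have "\<dots> = (\<Sum>x1\<in>Pow (T \<inter> D). \<Sum>x2\<in>Pow (T \<inter> E). \<Sum>y1\<in>Pow (T \<inter> D). \<Sum>y2\<in>Pow (T \<inter> E).
      (cmod (?A x1 y1))\<^sup>2 * (cmod (?B x2 y2))\<^sup>2)"
  proof -
    have "(x1 \<union> x2) \<inter> D = x1" "(x1 \<union> x2) \<inter> E = x2" if "x1 \<subseteq> T \<inter> D" "x2 \<subseteq> T \<inter> E" for x1 x2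
      using that dj by blast+
    moreover have "(\<Sum>x\<in>Pow T. h x) = (\<Sum>x1\<in>Pow (T \<inter> D). \<Sum>x2\<in>Pow (T \<inter> E). h (x1 \<union> x2))"
      for h :: "nat set \<Rightarrow> real"
      unfolding PowT using fin dj by (intro sum_Pow_Un) auto
    ultimately show ?thesis
      by (simp only: sum_distrib_left) (intro sum.cong refl, simp)
  qed
  also have "\<dots> = purity_on D f (T \<inter> D) * purity_on E g (T \<inter> E)"
    unfolding purity_on_def sum_product by (simp add: sum.swap[of _ "Pow (T \<inter> E)"])
  finally show ?thesis .
qed

lemma purity_on_tensor_le:
  assumes "is_state D f" "is_state E g" "D \<inter> E = {}" "T \<subseteq> D \<union> E"
    and "purity_on D f (T \<inter> D) \<le> c \<or> purity_on E g (T \<inter> E) \<le> c"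
  shows "purity_on (D \<union> E) (tensor D f E g) T \<le> c"
proof -
  let ?p = "purity_on D f (T \<inter> D)" and ?q = "purity_on E g (T \<inter> E)"
  have "?p * ?q \<le> ?p" "?p * ?q \<le> ?q"
    using assms(1,2) by (simp_all add: purity_on_nonneg purity_on_le_1 mult_left_le mult_left_le_one_le)
  then show ?thesis
    using assms(5) purity_on_tensor[OF assms(1,2)[THEN is_state_finite] assms(3,4), of f g]
    by linarith
qed

lemma purity_on_tensor_factor:
  assumes "is_state D f" "is_state E g" "D \<inter> E = {}"
  shows "purity_on (D \<union> E) (tensor D f E g) D = 1" "purity_on (D \<union> E) (tensor D f E g) E = 1"
proof -
  have fin: "finite D" "finite E"
    using assms(1,2) is_state_finite by blast+
  have "D \<inter> E = {}" "E \<inter> D = {}"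
    using assms(3) by blast+
  then show "purity_on (D \<union> E) (tensor D f E g) D = 1" "purity_on (D \<union> E) (tensor D f E g) E = 1"
    using purity_on_tensor[OF fin assms(3), of D f g] purity_on_tensor[OF fin assms(3), of E f g]
    by (simp_all add: purity_on_full purity_on_empty assms(1,2))
qed

lemma nontrivial_cut_Un:
  assumes "S \<subseteq> C \<union> C'" "S \<noteq> {}" "S \<noteq> C" "S \<noteq> C'" "S \<noteq> C \<union> C'"
  shows "S \<inter> C \<noteq> {} \<and> S \<inter> C \<subset> C \<or> S \<inter> C' \<noteq> {} \<and> S \<inter> C' \<subset> C'"
proof (rule ccontr)
  assume "\<not> ?thesis"
  then have "S \<inter> C = {} \<or> S \<inter> C = C" "S \<inter> C' = {} \<or> S \<inter> C' = C'"
    by blast+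
  then show False
    using assms by (elim disjE) blast+
qed

theorem proposition2p17:
  fixes n :: nat and C S :: "nat set" and a b :: "nat set \<Rightarrow> complex" and \<epsilon> :: real
  assumes "C \<noteq> {}" and "C \<subset> {..<n}"
    and "is_state C a" and "is_state ({..<n} - C) b"
    and "far_from_product \<epsilon> C a" and "far_from_product \<epsilon> ({..<n} - C) b"
    and "S \<noteq> {}" and "S \<subset> {..<n}"
  shows "(S = C \<or> S = {..<n} - C \<longrightarrow> purity n (tensor C a ({..<n} - C) b) S = 1)
       \<and> (S \<noteq> C \<and> S \<noteq> {..<n} - C \<longrightarrow> Re (purity n (tensor C a ({..<n} - C) b) S) \<le> 1 - \<epsilon>\<^sup>2)"
proof -
  define C' where "C' = {..<n} - C"
  have dj: "C \<inter> C' = {}" and univ: "{..<n} = C \<union> C'"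
    using assms(2) unfolding C'_def by auto
  note a = assms(3,5) and b = assms(4,6)[folded C'_def]
  have S: "S \<subseteq> C \<union> C'" "S \<noteq> C \<union> C'"
    using assms(8) univ by auto
  have "purity_on (C \<union> C') (tensor C a C' b) S = 1" if "S = C \<or> S = C'"
    using that purity_on_tensor_factor[OF a(1) b(1) dj] by blast
  moreover have "purity_on (C \<union> C') (tensor C a C' b) S \<le> 1 - \<epsilon>\<^sup>2" if "S \<noteq> C" "S \<noteq> C'"
  proof (rule purity_on_tensor_le[OF a(1) b(1) dj S(1)])
    from nontrivial_cut_Un[OF S(1) assms(7) that S(2)]
    show "purity_on C a (S \<inter> C) \<le> 1 - \<epsilon>\<^sup>2 \<or> purity_on C' b (S \<inter> C') \<le> 1 - \<epsilon>\<^sup>2"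
      by (elim disjE conjE) (simp_all add: purity_on_le_far[OF a] purity_on_le_far[OF b])
  qed
  ultimately show ?thesis
    unfolding C'_def[symmetric] unfolding purity_eq_purity_on univ Re_complex_of_real
    by (metis of_real_1)
qed

end
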